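(* Let $d\ge1$, $\epsilon>0$ and $\delta\ge0$ with $C_d\delta<1$. Then Mechanism-1 is unbiased: for every $x\in[-1,1]^d$, $\mathbb{E}[\mathcal{M}(x)]=x$ (coordinatewise).
   Context: Fix an integer $d\ge 1$. Let $C_d=2^{d-1}$ if $d$ is odd and $C_d=2^{d-1}-\frac12\binom{d}{d/2}$ if $d$ is even. For $B>0$ and $v\in\{-1,1\}^d$ let $T^+(v)=\{y\in\{-B,B\}^d: y\cdot v>0\}$, $T^-(v)=\{y\in\{-B,B\}^d: y\cdot v\le 0\}$. For $\alpha\in[0,1]$, $\mathcal{M}_{\alpha,B}$ takes $x\in[-1,1]^d$, samples $V\in\{-1,1\}^d$ with independent coordinates $\mathbb{P}[V_j=\pm1]=\frac12\pm\frac12x_j$, independently samples $u\in\{0,1\}$ with $\mathbb{P}[u=1]=\alpha$, and outputs a uniformly random element of $T^+(V)$ if $u=1$ and of $T^-(V)$ if $u=0$. Mechanism-1 with parameters $\epsilon>0,\delta\ge0$ is $\mathcal{M}=\mathcal{M}_{\alpha_{\epsilon,\delta},B_{\epsilon,\delta}}$ where $\alpha_{\epsilon,\delta}=\frac{e^\epsilon+C_d\delta}{e^\epsilon+1}$ if $d$ is odd and $\alpha_{\epsilon,\delta}=\frac{e^\epsilon C_d+\delta C_d(2^d-C_d)}{(e^\epsilon-1)C_d+2^d}$ if $d$ is even, and $B_{\epsilon,\delta}=\frac{2^d+C_d(e^\epsilon-1)}{\binom{d-1}{(d-1)/2}(e^\epsilon+2^d\delta-1)}$ if $d$ is odd, $B_{\epsilon,\delta}=\frac{2^d+C_d(e^\epsilon-1)}{\binom{d-1}{d/2}(e^\epsilon+2^d\delta-1)}$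 if $d$ is even. *)

theory Defs
  imports "HOL-Probability.Probability"
begin

text \<open>Vectors in R^d / {-1,1}^d / {-B,B}^d are represented as functions nat => real,
  coordinates indexed by {..<d}, extensional (value undefined outside {..<d}).\<close>

definition C_const :: "nat \<Rightarrow> real" where
  "C_const d = (if odd d then 2 ^ (d - 1)
                else 2 ^ (d - 1) - real (d choose (d div 2)) / 2)"

definition dotp :: "nat \<Rightarrow> (nat \<Rightarrow> real) \<Rightarrow> (nat \<Rightarrow> real) \<Rightarrow> real" where
  "dotp d y v = (\<Sum>j<d. y j * v j)"

definition cube :: "nat \<Rightarrow> real \<Rightarrow> (nat \<Rightarrow> real) set" where
  "cube d B = PiE {..<d} (\<lambda>_. {-B, B})"

definition T_plus :: "nat \<Rightarrow> real \<Rightarrow> (nat \<Rightarrow> real) \<Rightarrow> (nat \<Rightarrow> real) set" where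
  "T_plus d B v = {y \<in> cube d B. dotp d y v > 0}"

definition T_minus :: "nat \<Rightarrow> real \<Rightarrow> (nat \<Rightarrow> real) \<Rightarrow> (nat \<Rightarrow> real) set" where
  "T_minus d B v = {y \<in> cube d B. dotp d y v \<le> 0}"

definition V_pmf :: "nat \<Rightarrow> (nat \<Rightarrow> real) \<Rightarrow> (nat \<Rightarrow> real) pmf" where
  "V_pmf d x = Pi_pmf {..<d} undefined
     (\<lambda>j. map_pmf (\<lambda>b. if b then 1 else -1) (bernoulli_pmf (1/2 + x j / 2)))"

definition mech :: "nat \<Rightarrow> real \<Rightarrow> real \<Rightarrow> (nat \<Rightarrow> real) \<Rightarrow> (nat \<Rightarrow> real) pmf" where
  "mech d \<alpha> B x =
     bind_pmf (V_pmf d x) (\<lambda>V.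
     bind_pmf (bernoulli_pmf \<alpha>) (\<lambda>u.
       if u then pmf_of_set (T_plus d B V) else pmf_of_set (T_minus d B V)))"

definition alpha_param :: "nat \<Rightarrow> real \<Rightarrow> real \<Rightarrow> real" where
  "alpha_param d \<epsilon> \<delta> =
     (if odd d then (exp \<epsilon> + C_const d * \<delta>) / (exp \<epsilon> + 1)
      else (exp \<epsilon> * C_const d + \<delta> * C_const d * (2 ^ d - C_const d))
           / ((exp \<epsilon> - 1) * C_const d + 2 ^ d))"

definition B_param :: "nat \<Rightarrow> real \<Rightarrow> real \<Rightarrow> real" where
  "B_param d \<epsilon> \<delta> =
     (if odd d then (2 ^ d + C_const d * (exp \<epsilon> - 1))
                    / (real ((d - 1) choose ((d - 1) div 2)) * (exp \<epsilon> + 2 ^ d * \<delta> - 1))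
      else (2 ^ d + C_const d * (exp \<epsilon> - 1))
                    / (real ((d - 1) choose (d div 2)) * (exp \<epsilon> + 2 ^ d * \<delta> - 1)))"

definition mechanism1 :: "nat \<Rightarrow> real \<Rightarrow> real \<Rightarrow> (nat \<Rightarrow> real) \<Rightarrow> (nat \<Rightarrow> real) pmf" where
  "mechanism1 d \<epsilon> \<delta> = mech d (alpha_param d \<epsilon> \<delta>) (B_param d \<epsilon> \<delta>)"

end

theory Submission
  imports Defs
begin

text \<open>Fix the sign vector \<open>V = v\<close>. A vertex \<open>y\<close> of \<open>{-B,B}\<^sup>d\<close> is determined by the
  set \<open>A\<close> of coordinates where it agrees with \<open>B v\<close>, and \<open>y \<bullet> v = B (2|A| - d)\<close>; so
  \<open>T\<^sup>+(v)\<close> corresponds to the majority sets \<open>|A| > d/2\<close>, of which there are \<open>C\<^sub>d\<close>, and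
  \<open>T\<^sup>-(v)\<close> to the remaining subsets. Counting majority sets containing or avoiding \<open>j\<close> gives
  \<open>\<Sum>\<^bsub>T\<^sup>+(v)\<^esub> y\<^sub>j = B v\<^sub>j K\<close> and \<open>\<Sum>\<^bsub>T\<^sup>-(v)\<^esub> y\<^sub>j = -B v\<^sub>j K\<close> with
  \<open>K = (d-1 choose \<lfloor>d/2\<rfloor>)\<close>, hence
  \<open>E[M(x)\<^sub>j | V = v] = v\<^sub>j B K (\<alpha>/C\<^sub>d - (1-\<alpha>)/(2\<^sup>d - C\<^sub>d))\<close>.
  The parameters of Mechanism-1 make the factor after \<open>v\<^sub>j\<close> equal to 1, and \<open>E[V\<^sub>j] = x\<^sub>j\<close>.\<close>

definition majority_sets :: "nat \<Rightarrow> nat set set" where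
  "majority_sets d = {A. A \<subseteq> {..<d} \<and> d < 2 * card A}"

lemma majority_sets_subset_Pow: "majority_sets d \<subseteq> Pow {..<d}"
  by (auto simp: majority_sets_def)

lemma finite_majority_sets: "finite (majority_sets d)"
  using majority_sets_subset_Pow by (rule finite_subset) simp

lemma card_majority_sets:
  assumes "d \<ge> 1"
  shows "real (card (majority_sets d)) = C_const d"
proof -
  let ?U = "{..<d}"
  define minority where "minority = {A. A \<subseteq> ?U \<and> 2 * card A < d}"
  define ties where "ties = {A. A \<subseteq> ?U \<and> 2 * card A = d}"
  have card_compl: "card (?U - A) = d - card A \<and> card A \<le> d" if "A \<subseteq> ?U" for A
    using that by (simp add: card_Diff_subset finite_subset card_mono[of ?U A, simplified])
  have "bij_betw (\<lambda>A. ?U - A) (majority_sets d) minority"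
    by (rule bij_betw_byWitness[where f'="\<lambda>A. ?U - A"])
       (auto simp: majority_sets_def minority_def dest: card_compl)
  then have "card (majority_sets d) = card minority"
    by (rule bij_betw_same_card)
  moreover have "Pow ?U = majority_sets d \<union> minority \<union> ties"
    "majority_sets d \<inter> minority = {}" "(majority_sets d \<union> minority) \<inter> ties = {}"
    by (auto simp: majority_sets_def minority_def ties_def)
  moreover have "finite minority" "finite ties"
    by (auto simp: minority_def ties_def intro: finite_subset[of _ "Pow ?U"])
  ultimately have "2 ^ d = 2 * card (majority_sets d) + card ties"
    using finite_majority_sets card_Un_disjoint card_Pow[of ?U] by (metis card_lessThan finite_lessThan finite_Un mult_2)
  then have "(2::real) ^ d = 2 * real (card (majority_sets d)) + real (card ties)"
    by (metis of_nat_add of_nat_mult of_nat_numeral of_nat_power)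
  moreover have "card ties = (if even d then d choose (d div 2) else 0)"
  proof (cases "even d")
    case True
    then have "ties = {A. A \<subseteq> ?U \<and> card A = d div 2}" by (auto simp: ties_def)
    with True show ?thesis by (simp add: n_subsets)
  qed (auto simp: ties_def)
  moreover have "(2::real) ^ d = 2 * 2 ^ (d - 1)"
    using assms by (cases d) simp_all
  ultimately show ?thesis
    unfolding C_const_def by (cases "even d") simp_all
qed

lemma bij_betw_insert_subsets:
  assumes "finite U" "j \<in> U"
  shows "bij_betw (insert j) {A. A \<subseteq> U \<and> j \<notin> A \<and> P (Suc (card A))}
                            {A. A \<subseteq> U \<and> j \<in> A \<and> P (card A)}"
proof (rule bij_betw_byWitness[where f'="\<lambda>A. A - {j}"])
  have fin: "finite A" if "A \<subseteq> U" for A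
    using that assms(1) by (rule finite_subset)
  show "insert j ` {A. A \<subseteq> U \<and> j \<notin> A \<and> P (Suc (card A))}
        \<subseteq> {A. A \<subseteq> U \<and> j \<in> A \<and> P (card A)}"
  proof
    fix B assume "B \<in> insert j ` {A. A \<subseteq> U \<and> j \<notin> A \<and> P (Suc (card A))}"
    then obtain A where A: "A \<subseteq> U" "j \<notin> A" "P (Suc (card A))" "B = insert j A" by auto
    then have "card B = Suc (card A)"
      using fin by simp
    with A assms(2) show "B \<in> {A. A \<subseteq> U \<and> j \<in> A \<and> P (card A)}" by simp
  qed
  show "(\<lambda>A. A - {j}) ` {A. A \<subseteq> U \<and> j \<in> A \<and> P (card A)}
        \<subseteq> {A. A \<subseteq> U \<and> j \<notin> A \<and> P (Suc (card A))}"
  proof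
    fix B assume "B \<in> (\<lambda>A. A - {j}) ` {A. A \<subseteq> U \<and> j \<in> A \<and> P (card A)}"
    then obtain A where A: "A \<subseteq> U" "j \<in> A" "P (card A)" "B = A - {j}" by auto
    then have "P (Suc (card B))"
      using card_Suc_Diff1[OF fin] by metis
    with A show "B \<in> {A. A \<subseteq> U \<and> j \<notin> A \<and> P (Suc (card A))}" by auto
  qed
  show "\<forall>A\<in>{A. A \<subseteq> U \<and> j \<notin> A \<and> P (Suc (card A))}. insert j A - {j} = A"
    by blast
  show "\<forall>A\<in>{A. A \<subseteq> U \<and> j \<in> A \<and> P (card A)}. insert j (A - {j}) = A"
    by blast
qed

lemma sum_sign_eq_card_diff:
  assumes "finite X"
  shows "(\<Sum>A\<in>X. if j \<in> A then 1 else -1 :: real)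
       = real (card {A\<in>X. j \<in> A}) - real (card {A\<in>X. j \<notin> A})"
proof -
  have "X \<inter> {A. j \<in> A} = {A\<in>X. j \<in> A}" "X \<inter> - {A. j \<in> A} = {A\<in>X. j \<notin> A}"
    by auto
  then show ?thesis
    using sum.If_cases[OF assms, of "\<lambda>A. j \<in> A" "\<lambda>_. 1" "\<lambda>_. -1 :: real"] by simp
qed

lemma sum_sign_Pow:
  assumes "finite U" "j \<in> U"
  shows "(\<Sum>A\<in>Pow U. if j \<in> A then 1 else -1 :: real) = 0"
proof -
  have "card {A\<in>Pow U. j \<notin> A} = card {A\<in>Pow U. j \<in> A}"
    using bij_betw_same_card[OF bij_betw_insert_subsets[OF assms, of "\<lambda>_. True"]] by simp
  then show ?thesis
    using assms by (simp add: sum_sign_eq_card_diff)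
qed

text \<open>Removing \<open>j\<close> matches the majority sets containing \<open>j\<close> with those avoiding it,
  except for the ones of size \<open>\<lfloor>d/2\<rfloor> + 1\<close>.\<close>

lemma sum_sign_majority_sets:
  assumes "j < d"
  shows "(\<Sum>A\<in>majority_sets d. if j \<in> A then 1 else -1 :: real) = real ((d - 1) choose (d div 2))"
proof -
  let ?U = "{..<d}"
  define large where "large = {A. A \<subseteq> ?U \<and> j \<in> A \<and> d + 2 < 2 * card A}"
  define critical where "critical = {A. A \<subseteq> ?U \<and> j \<in> A \<and> card A = Suc (d div 2)}"
  have "{A\<in>majority_sets d. j \<notin> A} = {A. A \<subseteq> ?U \<and> j \<notin> A \<and> d + 2 < 2 * Suc (card A)}"
    by (auto simp: majority_sets_def)
  also have "card \<dots> = card large"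
    unfolding large_def using assms
    by (intro bij_betw_same_card[OF bij_betw_insert_subsets[of ?U j "\<lambda>c. d + 2 < 2 * c"]]) auto
  finally have without_j: "card {A\<in>majority_sets d. j \<notin> A} = card large" .
  have "card critical = card {A. A \<subseteq> ?U \<and> j \<notin> A \<and> Suc (card A) = Suc (d div 2)}"
    unfolding critical_def using assms
    by (intro bij_betw_same_card[OF bij_betw_insert_subsets[of ?U j "\<lambda>c. c = Suc (d div 2)"], symmetric]) auto
  also have "{A. A \<subseteq> ?U \<and> j \<notin> A \<and> Suc (card A) = Suc (d div 2)} = {A. A \<subseteq> ?U - {j} \<and> card A = d div 2}"
    by auto
  finally have "card critical = (d - 1) choose (d div 2)"
    using assms by (simp add: n_subsets)
  moreover have "{A\<in>majority_sets d. j \<in> A} = large \<union> critical" "large \<inter> critical = {}"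
    by (auto simp: majority_sets_def large_def critical_def)
  moreover have "finite large" "finite critical"
    by (auto simp: large_def critical_def intro: finite_subset[of _ "Pow ?U"])
  ultimately show ?thesis
    using without_j by (simp add: sum_sign_eq_card_diff finite_majority_sets card_Un_disjoint)
qed

definition cube_vertex :: "nat \<Rightarrow> real \<Rightarrow> (nat \<Rightarrow> real) \<Rightarrow> nat set \<Rightarrow> nat \<Rightarrow> real" where
  "cube_vertex d B v A = restrict (\<lambda>i. if i \<in> A then B * v i else - (B * v i)) {..<d}"

lemma sign_vector_cases:
  assumes "v \<in> cube d 1" "i < d"
  shows "v i = 1 \<or> v i = -1"
  using assms by (auto simp: cube_def)

lemma bij_betw_cube_vertex:
  assumes "B \<noteq> 0" "v \<in> cube d 1"
  shows "bij_betw (cube_vertex d B v) (Pow {..<d}) (cube d B)"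
proof (rule bij_betw_byWitness[where f'="\<lambda>y. {i. i < d \<and> y i = B * v i}"])
  have sign: "v i = 1 \<or> v i = -1" if "i < d" for i
    using sign_vector_cases[OF assms(2) that] .
  have flip: "- (B * v i) \<noteq> B * v i" if "i < d" for i
    using sign[OF that] assms(1) by auto
  show "\<forall>A\<in>Pow {..<d}. {i. i < d \<and> cube_vertex d B v A i = B * v i} = A"
    using flip by (auto simp: cube_vertex_def)
  show "\<forall>y\<in>cube d B. cube_vertex d B v {i. i < d \<and> y i = B * v i} = y"
  proof (intro ballI ext)
    fix y i assume y: "y \<in> cube d B"
    show "cube_vertex d B v {i. i < d \<and> y i = B * v i} i = y i"
    proof (cases "i < d")
      case True
      then have "y i \<in> {-B, B}"
        using y by (auto simp: cube_def)
      then have "y i = B * v i \<or> y i = - (B * v i)"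
        using sign[OF True] by (elim disjE insertE) simp_all
      then show ?thesis
        using True by (auto simp: cube_vertex_def)
    next
      case False
      moreover have "y i = undefined"
        using PiE_arb[of y "{..<d}" "\<lambda>_. {-B, B}" i] y False by (simp add: cube_def)
      ultimately show ?thesis
        by (simp add: cube_vertex_def)
    qed
  qed
  show "cube_vertex d B v ` Pow {..<d} \<subseteq> cube d B"
  proof (rule image_subsetI)
    fix A
    have "(if i \<in> A then B * v i else - (B * v i)) \<in> {-B, B}" if "i < d" for i
      using sign[OF that] by auto
    then show "cube_vertex d B v A \<in> cube d B"
      unfolding cube_def cube_vertex_def by (simp add: restrict_PiE_iff)
  qed
qed auto

lemma dotp_cube_vertex:
  assumes "v \<in> cube d 1" "A \<subseteq> {..<d}"
  shows "dotp d (cube_vertex d B v A) v = B * (2 * real (card A) - real d)"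
proof -
  have "dotp d (cube_vertex d B v A) v = (\<Sum>i<d. if i \<in> A then B else - B)"
    unfolding dotp_def cube_vertex_def
    by (rule sum.cong) (use sign_vector_cases[OF assms(1)] in fastforce)+
  also have "\<dots> = B * real (card A) - B * real (card ({..<d} - A))"
    using assms(2) by (simp add: sum.If_cases Int_absorb1 Diff_eq)
  also have "card ({..<d} - A) = d - card A" "card A \<le> d"
    using assms(2) by (simp_all add: card_Diff_subset finite_subset card_mono[of "{..<d}", simplified])
  ultimately show ?thesis by (simp add: algebra_simps of_nat_diff)
qed

lemma cube_vertex_component:
  "j < d \<Longrightarrow> cube_vertex d B v A j = B * v j * (if j \<in> A then 1 else -1)"
  by (simp add: cube_vertex_def)

lemma bij_betw_T_plus:
  assumes "B > 0" "v \<in> cube d 1"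
  shows "bij_betw (cube_vertex d B v) (majority_sets d) (T_plus d B v)"
proof -
  have "bij_betw (cube_vertex d B v) {A \<in> Pow {..<d}. d < 2 * card A} {y \<in> cube d B. 0 < dotp d y v}"
    by (rule bij_betw_Collect[OF bij_betw_cube_vertex])
       (use assms in \<open>auto simp: dotp_cube_vertex zero_less_mult_iff\<close>)
  moreover have "majority_sets d = {A \<in> Pow {..<d}. d < 2 * card A}"
    by (auto simp: majority_sets_def)
  ultimately show ?thesis
    by (simp add: T_plus_def)
qed

lemma bij_betw_T_minus:
  assumes "B > 0" "v \<in> cube d 1"
  shows "bij_betw (cube_vertex d B v) (Pow {..<d} - majority_sets d) (T_minus d B v)"
proof -
  have "bij_betw (cube_vertex d B v) {A \<in> Pow {..<d}. \<not> d < 2 * card A} {y \<in> cube d B. dotp d y v \<le> 0}"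
    by (rule bij_betw_Collect[OF bij_betw_cube_vertex])
       (use assms in \<open>auto simp: dotp_cube_vertex mult_le_0_iff\<close>)
  moreover have "Pow {..<d} - majority_sets d = {A \<in> Pow {..<d}. \<not> d < 2 * card A}"
    by (auto simp: majority_sets_def)
  ultimately show ?thesis
    by (simp add: T_minus_def)
qed

lemma finite_cube: "finite (cube d B)"
  unfolding cube_def by (rule finite_PiE) auto

lemma card_T_plus:
  assumes "d \<ge> 1" "B > 0" "v \<in> cube d 1"
  shows "real (card (T_plus d B v)) = C_const d"
  using bij_betw_same_card[OF bij_betw_T_plus[OF assms(2,3)]] card_majority_sets[OF assms(1)] by simp

lemma card_T_minus:
  assumes "d \<ge> 1" "B > 0" "v \<in> cube d 1"
  shows "real (card (T_minus d B v)) = 2 ^ d - C_const d"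
proof -
  have "card (Pow {..<d} - majority_sets d) = 2 ^ d - card (majority_sets d)"
    using majority_sets_subset_Pow finite_majority_sets by (simp add: card_Diff_subset card_Pow)
  moreover have "card (majority_sets d) \<le> 2 ^ d"
    using card_mono[OF _ majority_sets_subset_Pow] by (simp add: card_Pow)
  ultimately show ?thesis
    using bij_betw_same_card[OF bij_betw_T_minus[OF assms(2,3)]] card_majority_sets[OF assms(1)]
    by (simp add: of_nat_diff)
qed

lemma C_const_bounds:
  assumes "d \<ge> 1"
  shows "0 < C_const d" "C_const d < 2 ^ d"
proof -
  have "{..<d} \<in> majority_sets d"
    using assms by (simp add: majority_sets_def)
  then show "0 < C_const d"
    using card_majority_sets[OF assms] finite_majority_sets card_gt_0_iff[of "majority_sets d"]
    by fastforce
  have "{} \<notin> majority_sets d"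
    by (simp add: majority_sets_def)
  then have "card (majority_sets d) < card (Pow {..<d})"
    using majority_sets_subset_Pow by (intro psubset_card_mono) blast+
  then have "real (card (majority_sets d)) < 2 ^ d"
    by (simp add: card_Pow)
  then show "C_const d < 2 ^ d"
    using card_majority_sets[OF assms] by simp
qed

lemma sum_T_plus_component:
  assumes "B > 0" "v \<in> cube d 1" "j < d"
  shows "(\<Sum>y\<in>T_plus d B v. y j) = B * v j * real ((d - 1) choose (d div 2))"
proof -
  have "(\<Sum>y\<in>T_plus d B v. y j) = (\<Sum>A\<in>majority_sets d. cube_vertex d B v A j)"
    using sum.reindex_bij_betw[OF bij_betw_T_plus[OF assms(1,2)], of "\<lambda>y. y j"] by simp
  also have "\<dots> = B * v j * (\<Sum>A\<in>majority_sets d. if j \<in> A then 1 else -1)"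
    using assms(3) by (simp add: cube_vertex_component sum_distrib_left)
  finally show ?thesis
    using assms(3) by (simp add: sum_sign_majority_sets)
qed

lemma sum_T_minus_component:
  assumes "B > 0" "v \<in> cube d 1" "j < d"
  shows "(\<Sum>y\<in>T_minus d B v. y j) = - (B * v j * real ((d - 1) choose (d div 2)))"
proof -
  have "(\<Sum>y\<in>T_minus d B v. y j) = (\<Sum>A\<in>Pow {..<d} - majority_sets d. cube_vertex d B v A j)"
    using sum.reindex_bij_betw[OF bij_betw_T_minus[OF assms(1,2)], of "\<lambda>y. y j"] by simp
  also have "\<dots> = B * v j * (\<Sum>A\<in>Pow {..<d} - majority_sets d. if j \<in> A then 1 else -1)"
    using assms(3) by (simp add: cube_vertex_component sum_distrib_left)
  also have "(\<Sum>A\<in>Pow {..<d} - majority_sets d. if j \<in> A then 1 else -1 :: real)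
           = - real ((d - 1) choose (d div 2))"
    using assms(3) majority_sets_subset_Pow
    by (simp add: sum_diff sum_sign_Pow sum_sign_majority_sets)
  finally show ?thesis by simp
qed

lemma finite_T_plus: "finite (T_plus d B v)"
  using finite_cube by (simp add: T_plus_def)

lemma finite_T_minus: "finite (T_minus d B v)"
  using finite_cube by (simp add: T_minus_def)

lemma T_plus_nonempty:
  assumes "d \<ge> 1" "B > 0" "v \<in> cube d 1"
  shows "T_plus d B v \<noteq> {}"
  using card_T_plus[OF assms] C_const_bounds[OF assms(1)] by auto

lemma T_minus_nonempty:
  assumes "d \<ge> 1" "B > 0" "v \<in> cube d 1"
  shows "T_minus d B v \<noteq> {}"
  using card_T_minus[OF assms] C_const_bounds[OF assms(1)] by auto

lemma expectation_given_sign_vector: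
  assumes "d \<ge> 1" "B > 0" "0 \<le> \<alpha>" "\<alpha> \<le> 1" "v \<in> cube d 1" "j < d"
  shows "measure_pmf.expectation (bernoulli_pmf \<alpha> \<bind> (\<lambda>u.
           if u then pmf_of_set (T_plus d B v) else pmf_of_set (T_minus d B v))) (\<lambda>y. y j)
       = v j * B * real ((d - 1) choose (d div 2))
           * (\<alpha> / C_const d - (1 - \<alpha>) / (2 ^ d - C_const d))"
proof -
  note fin = finite_T_plus finite_T_minus
  note nonempty = T_plus_nonempty[OF assms(1,2,5)] T_minus_nonempty[OF assms(1,2,5)]
  have "measure_pmf.expectation (bernoulli_pmf \<alpha> \<bind> (\<lambda>u.
           if u then pmf_of_set (T_plus d B v) else pmf_of_set (T_minus d B v))) (\<lambda>y. y j)
      = \<alpha> * ((\<Sum>y\<in>T_plus d B v. y j) / card (T_plus d B v))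
        + (1 - \<alpha>) * ((\<Sum>y\<in>T_minus d B v. y j) / card (T_minus d B v))"
    using assms(3,4) fin nonempty
    by (subst pmf_expectation_bind[of UNIV]) (auto simp: UNIV_bool integral_pmf_of_set)
  then show ?thesis
    using assms
    by (simp add: card_T_plus card_T_minus sum_T_plus_component sum_T_minus_component field_simps)
qed

lemma set_V_pmf: "set_pmf (V_pmf d x) \<subseteq> cube d 1"
  unfolding V_pmf_def cube_def by (subst set_Pi_pmf) (auto simp: PiE_dflt_def PiE_def extensional_def)

lemma expectation_V_pmf_component:
  assumes "j < d" "-1 \<le> x j" "x j \<le> 1"
  shows "measure_pmf.expectation (V_pmf d x) (\<lambda>V. V j) = x j"
proof -
  have "measure_pmf.expectation (V_pmf d x) (\<lambda>V. V j)
      = measure_pmf.expectation (map_pmf (\<lambda>V. V j) (V_pmf d x)) (\<lambda>t. t)"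
    by simp
  also have "map_pmf (\<lambda>V. V j) (V_pmf d x)
           = map_pmf (\<lambda>b. if b then 1 else -1) (bernoulli_pmf (1/2 + x j / 2))"
    unfolding V_pmf_def using assms(1) by (simp add: Pi_pmf_component)
  finally show ?thesis
    using assms(2,3) by simp
qed

lemma expectation_mech_component:
  assumes "d \<ge> 1" "B > 0" "0 \<le> \<alpha>" "\<alpha> \<le> 1"
    and scaling: "B * real ((d - 1) choose (d div 2)) * (\<alpha> / C_const d - (1 - \<alpha>) / (2 ^ d - C_const d)) = 1"
    and "j < d" "-1 \<le> x j" "x j \<le> 1"
  shows "measure_pmf.expectation (mech d \<alpha> B x) (\<lambda>y. y j) = x j"
proof -
  let ?V = "V_pmf d x"
  let ?Y = "\<lambda>v. bernoulli_pmf \<alpha> \<bind> (\<lambda>u.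
             if u then pmf_of_set (T_plus d B v) else pmf_of_set (T_minus d B v))"
  have fin: "finite (set_pmf ?V)"
    using set_V_pmf finite_cube by (rule finite_subset)
  have fin_Y: "finite (set_pmf (?Y v))" if "v \<in> set_pmf ?V" for v
  proof -
    have "v \<in> cube d 1"
      using set_V_pmf that by blast
    then show ?thesis
      using T_plus_nonempty[OF assms(1,2)] T_minus_nonempty[OF assms(1,2)]
      by (auto simp: set_bind_pmf finite_T_plus finite_T_minus)
  qed
  have "measure_pmf.expectation (mech d \<alpha> B x) (\<lambda>y. y j)
      = (\<Sum>v\<in>set_pmf ?V. pmf ?V v * measure_pmf.expectation (?Y v) (\<lambda>y. y j))"
    unfolding mech_def using fin fin_Y by (simp add: pmf_expectation_bind[of "set_pmf ?V"])
  also have "\<dots> = (\<Sum>v\<in>set_pmf ?V. pmf ?V v * v j)"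
  proof (rule sum.cong)
    fix v assume "v \<in> set_pmf ?V"
    then have "v \<in> cube d 1"
      using set_V_pmf by blast
    then have "measure_pmf.expectation (?Y v) (\<lambda>y. y j) = v j"
      using expectation_given_sign_vector[OF assms(1-4) _ assms(6)] scaling
      by (simp add: mult.assoc)
    then show "pmf ?V v * measure_pmf.expectation (?Y v) (\<lambda>y. y j) = pmf ?V v * v j"
      by simp
  qed simp
  also have "\<dots> = measure_pmf.expectation ?V (\<lambda>v. v j)"
    using fin by (simp add: integral_measure_pmf[of "set_pmf ?V"])
  finally show ?thesis
    using assms(6-8) by (simp add: expectation_V_pmf_component)
qed

lemma mechanism_parameters:
  fixes e C N K \<delta> :: real
  assumes "1 < e" "0 < C" "C < N" "0 < K" "0 \<le> \<delta>" "C * \<delta> < 1"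
  defines "\<alpha> \<equiv> (e * C + \<delta> * C * (N - C)) / ((e - 1) * C + N)"
    and "B \<equiv> (N + C * (e - 1)) / (K * (e + N * \<delta> - 1))"
  shows "0 \<le> \<alpha>" "\<alpha> \<le> 1" "0 < B" "B * K * (\<alpha> / C - (1 - \<alpha>) / (N - C)) = 1"
proof -
  define D where "D = (e - 1) * C + N"
  have "0 < (e - 1) * C" "0 \<le> N * \<delta>"
    using assms(1-3,5) by simp_all
  then have D_pos: "0 < D" and gap_pos: "0 < e + N * \<delta> - 1"
    using assms(1-3) unfolding D_def by linarith+
  have \<alpha>_eq: "\<alpha> = C * (e + \<delta> * (N - C)) / D"
    by (simp add: \<alpha>_def D_def algebra_simps)
  have "1 - \<alpha> = (D - C * (e + \<delta> * (N - C))) / D"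
    using D_pos by (simp add: \<alpha>_eq field_simps)
  also have "D - C * (e + \<delta> * (N - C)) = (N - C) * (1 - C * \<delta>)"
    by (simp add: D_def algebra_simps)
  finally have one_minus_\<alpha>: "1 - \<alpha> = (N - C) * (1 - C * \<delta>) / D" .
  have "\<alpha> / C = (e + \<delta> * (N - C)) / D"
    using assms(2) by (simp add: \<alpha>_eq)
  moreover have "(1 - \<alpha>) / (N - C) = (1 - C * \<delta>) / D"
    using assms(3) unfolding one_minus_\<alpha> by simp
  ultimately have "\<alpha> / C - (1 - \<alpha>) / (N - C) = ((e + \<delta> * (N - C)) - (1 - C * \<delta>)) / D"
    by (simp add: diff_divide_distrib)
  also have "\<dots> = (e + N * \<delta> - 1) / D"
    by (simp add: algebra_simps)
  finally have "\<alpha> / C - (1 - \<alpha>) / (N - C) = (e + N * \<delta> - 1) / D" .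
  moreover have B_eq: "B = D / (K * (e + N * \<delta> - 1))"
    by (simp add: B_def D_def algebra_simps)
  ultimately show "B * K * (\<alpha> / C - (1 - \<alpha>) / (N - C)) = 1"
    using assms(4) D_pos gap_pos by simp
  have "0 \<le> e + \<delta> * (N - C)"
    using assms(1,3,5) by simp
  then show "0 \<le> \<alpha>"
    using assms(2) D_pos by (simp add: \<alpha>_eq)
  have "\<delta> * C * (N - C) \<le> N - C"
    using mult_right_mono[of "\<delta> * C" 1 "N - C"] assms(3,6) by (simp add: mult.commute)
  then have "C * (e + \<delta> * (N - C)) \<le> D"
    by (simp add: D_def algebra_simps)
  then show "\<alpha> \<le> 1"
    using D_pos by (simp add: \<alpha>_eq)
  show "0 < B"
    using assms(4) D_pos gap_pos by (simp add: B_eq)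
qed

text \<open>For odd \<open>d\<close> one has \<open>2\<^sup>d = 2 C\<^sub>d\<close>, which turns the odd-case formula into the even-case one.\<close>

lemma alpha_param_eq:
  assumes "d \<ge> 1"
  shows "alpha_param d \<epsilon> \<delta> = (exp \<epsilon> * C_const d + \<delta> * C_const d * (2 ^ d - C_const d))
                                  / ((exp \<epsilon> - 1) * C_const d + 2 ^ d)"
proof (cases "odd d")
  case True
  let ?C = "C_const d"
  have "(2::real) ^ d = 2 * ?C"
    using True assms by (cases d) (simp_all add: C_const_def)
  then have "(exp \<epsilon> * ?C + \<delta> * ?C * (2 ^ d - ?C)) / ((exp \<epsilon> - 1) * ?C + 2 ^ d)
           = (?C * (exp \<epsilon> + ?C * \<delta>)) / (?C * (exp \<epsilon> + 1))"
    by (simp add: algebra_simps)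
  also have "\<dots> = (exp \<epsilon> + ?C * \<delta>) / (exp \<epsilon> + 1)"
    using C_const_bounds(1)[OF assms] by simp
  finally show ?thesis
    using True by (simp add: alpha_param_def)
qed (simp add: alpha_param_def)

lemma B_param_eq:
  "B_param d \<epsilon> \<delta> = (2 ^ d + C_const d * (exp \<epsilon> - 1))
                      / (real ((d - 1) choose (d div 2)) * (exp \<epsilon> + 2 ^ d * \<delta> - 1))"
proof -
  have "odd d \<Longrightarrow> (d - 1) div 2 = d div 2"
    by presburger
  then show ?thesis
    by (simp add: B_param_def)
qed

theorem lemma3:
  fixes d :: nat and \<epsilon> \<delta> :: real and x :: "nat \<Rightarrow> real"
  assumes "d \<ge> 1" and "\<epsilon> > 0" and "\<delta> \<ge> 0" and "C_const d * \<delta> < 1"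
    and "\<forall>j<d. -1 \<le> x j \<and> x j \<le> 1"
  shows "\<forall>j<d. measure_pmf.expectation (mechanism1 d \<epsilon> \<delta> x) (\<lambda>y. y j) = x j"
proof (intro allI impI)
  fix j assume "j < d"
  have "0 < real ((d - 1) choose (d div 2))"
    using assms(1) by simp
  note parameters = mechanism_parameters[OF _ C_const_bounds[OF assms(1)] this assms(3,4)]
  show "measure_pmf.expectation (mechanism1 d \<epsilon> \<delta> x) (\<lambda>y. y j) = x j"
    unfolding mechanism1_def alpha_param_eq[OF assms(1)] B_param_eq
    using parameters[of "exp \<epsilon>"] assms(1,2,5) \<open>j < d\<close>
    by (intro expectation_mech_component) auto
qed

end
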